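(* Let $\psi\in\mathbf{\Psi}_n$. Then the dual norm of $|\!|\!|\cdot|\!|\!|_\psi$ satisfies, for all $(x^*_1,\ldots,x^*_n)\in(X^n)^*\cong(X^* )^n$, $$|\!|\!|(x^*_1,\ldots,x^*_n)|\!|\!|_{\psi} =\max_{(t_1,\ldots,t_n)\in\Omega_n}\frac{\sum_{i=1}^nt_i\|x^*_i\|}{\psi (t_1,\ldots,t_{n})}.$$
   Context: Let $(X,\|\cdot\|)$ be a normed vector space, $n\ge2$; the dual norm on $X^*$ is also denoted $\|\cdot\|$, and the dual norm of a norm on $X^n$ is denoted by the same symbol. $\Omega_n:=\{t\in\mathbb{R}^n\mid t_i\ge0,\ \sum_i t_i=1\}$, $\Omega_n^\circ:=\{t\in\Omega_n\mid t_i<1\ \forall i\}$. $\mathbf{\Psi}_n$ is the class of convex continuous $\psi:\Omega_n\to\mathbb{R}$ with (B1) $\psi(\mathbf{e}_i)=1$ for all standard unit vectors $\mathbf{e}_i$ and (B2) $\psi(t)\ge(1-t_i)\psi\big(\frac{t_1}{1-t_i},\ldots,\frac{t_{i-1}}{1-t_i},0,\frac{t_{i+1}}{1-t_i},\ldots,\frac{t_n}{1-t_i}\big)$ for all $t\in\Omega_n^\circ$, $i=1,\ldots,n$. For $\psi\in\mathbf{\Psi}_n$, $|\!|\!|x|\!|\!|_\psi:=\big(\sum_{i=1}^n\|x_i\|\big)\,\psi\big(\frac{\|x_1\|}{\sum_{i}\|x_i\|},\ldots,\frac{\|x_n\|}{\sum_{i}\|x_i\|}\big)$ for $x=(x_1,\ldots,x_n)\in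 X^n\setminus\{0\}$ and $|\!|\!|0|\!|\!|_\psi:=0$; this is a norm on $X^n$. *)

theory Defs
  imports "HOL-Analysis.Analysis"
begin

text \<open>The simplex Omega_n, indexed by a finite type 'n with CARD('n) = n.\<close>
definition Omega :: "(real ^ 'n::finite) set" where
  "Omega = {t. (\<forall>i. 0 \<le> t $ i) \<and> (\<Sum>i\<in>UNIV. t $ i) = 1}"

definition Omega_o :: "(real ^ 'n::finite) set" where
  "Omega_o = {t \<in> Omega. \<forall>i. t $ i < 1}"

definition Psi :: "((real ^ 'n::finite) \<Rightarrow> real) set" where
  "Psi = {\<psi>. convex_on Omega \<psi> \<and> continuous_on Omega \<psi>
              \<and> (\<forall>i. \<psi> (axis i 1) = 1)
              \<and> (\<forall>t\<in>Omega_o. \<forall>i.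
                    \<psi> t \<ge> (1 - t $ i) *
                      \<psi> (\<chi> j. if j = i then 0 else t $ j / (1 - t $ i)))}"

definition psi_norm :: "((real ^ 'n::finite) \<Rightarrow> real) \<Rightarrow> ('a::real_normed_vector) ^ 'n \<Rightarrow> real" where
  "psi_norm \<psi> x = (if x = 0 then 0 else
     (\<Sum>i\<in>UNIV. norm (x $ i)) *
       \<psi> (\<chi> i. norm (x $ i) / (\<Sum>j\<in>UNIV. norm (x $ j))))"

text \<open>Dual norm of psi_norm, evaluated at the functional on X^n induced by the tuple
  (x*_1,...,x*_n) of bounded linear functionals, x \<mapsto> sum_i x*_i(x_i).\<close>
definition dual_psi_norm :: "((real ^ 'n::finite) \<Rightarrow> real) \<Rightarrow> (('a::real_normed_vector) \<Rightarrow> real) ^ 'n \<Rightarrow> real" where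
  "dual_psi_norm \<psi> f = Sup {\<bar>\<Sum>i\<in>UNIV. (f $ i) (x $ i)\<bar> | x :: 'a ^ 'n. psi_norm \<psi> x \<le> 1}"

end

theory Submission
  imports Defs
begin

text \<open>Write s = sum_i ||x_i|| and t = (||x_i|| / s)_i, a point of Omega_n, so that
  |||x|||_psi = s psi(t). Then
  |sum_i x*_i(x_i)| <= s sum_i t_i ||x*_i|| = |||x|||_psi (sum_i t_i ||x*_i||) / psi(t),
  and the ratio attains its maximum at some t0 because Omega_n is compact and psi is positive
  on it: (B2) yields psi(t) >= max_i t_i. Conversely, x_i = (t0_i / psi(t0)) y_i with unit
  vectors y_i almost norming x*_i has |||x|||_psi = 1 and nearly attains the bound.\<close>

lemma Omega_component_le_one:
  assumes "t \<in> Omega"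
  shows "t $ i \<le> 1"
proof -
  have "t $ i \<le> (\<Sum>j\<in>UNIV. t $ j)"
    using assms by (intro member_le_sum) (auto simp: Omega_def)
  with assms show ?thesis by (simp add: Omega_def)
qed

lemma Omega_eq_axis:
  assumes "t \<in> Omega" and "t $ m = 1"
  shows "t = axis m 1"
proof -
  have "(\<Sum>j\<in>UNIV - {m}. t $ j) = 0"
    using assms sum.remove[of UNIV m "\<lambda>j. t $ j"] by (simp add: Omega_def)
  then have "\<forall>j\<in>UNIV - {m}. t $ j = 0"
    using assms(1) by (subst (asm) sum_nonneg_eq_0_iff) (auto simp: Omega_def)
  with assms(2) show ?thesis
    by (auto simp: vec_eq_iff axis_def)
qed

lemma axis_in_Omega: "axis i 1 \<in> Omega"
  by (simp add: Omega_def axis_def)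

lemma compact_Omega: "compact (Omega :: (real ^ 'n::finite) set)"
proof (rule compact_eq_bounded_closed[THEN iffD2], rule conjI)
  have "norm t \<le> 1" if "t \<in> Omega" for t :: "real ^ 'n"
  proof -
    have "norm t \<le> (\<Sum>i\<in>UNIV. \<bar>t $ i\<bar>)"
      by (rule norm_le_l1_cart)
    also have "\<dots> = 1"
      using that by (simp add: Omega_def)
    finally show ?thesis .
  qed
  then show "bounded (Omega :: (real ^ 'n) set)"
    unfolding bounded_iff by blast
  have Omega_eq: "(Omega :: (real ^ 'n) set) =
      (\<Inter>i. {t. 0 \<le> t $ i}) \<inter> {t. (\<Sum>i\<in>UNIV. t $ i) = 1}"
    by (auto simp: Omega_def)
  show "closed (Omega :: (real ^ 'n) set)"
    unfolding Omega_eq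
    by (intro closed_Int closed_INT ballI closed_Collect_le closed_Collect_eq continuous_intros)
qed

definition face_projection :: "'n::finite \<Rightarrow> real ^ 'n \<Rightarrow> real ^ 'n" where
  "face_projection i t = (\<chi> j. if j = i then 0 else t $ j / (1 - t $ i))"

lemma face_projection_in_Omega:
  assumes "t \<in> Omega" and "t $ i < 1"
  shows "face_projection i t \<in> Omega"
proof -
  have "(\<Sum>j\<in>UNIV. face_projection i t $ j) = (\<Sum>j\<in>UNIV - {i}. t $ j) / (1 - t $ i)"
    by (simp add: sum.remove[of UNIV i] face_projection_def sum_divide_distrib)
  also have "\<dots> = 1"
    using assms sum.remove[of UNIV i "\<lambda>j. t $ j"] by (simp add: Omega_def)
  finally show ?thesis
    using assms by (simp add: Omega_def face_projection_def)
qed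

lemma Psi_face_projection_le:
  assumes "\<psi> \<in> Psi" and "t \<in> Omega_o"
  shows "(1 - t $ i) * \<psi> (face_projection i t) \<le> \<psi> t"
  using assms by (simp add: Psi_def face_projection_def)

text \<open>Condition (B2) lets one remove a nonzero coordinate other than \<open>j\<close> while only
  enlarging the \<open>j\<close>-th one, so the claim follows by induction on the size of the
  support.\<close>

lemma Psi_ge_component:
  assumes psi: "\<psi> \<in> Psi" and t: "t \<in> Omega"
  shows "t $ j \<le> \<psi> t"
proof -
  have "t $ j \<le> \<psi> t" if "t \<in> Omega" and "card {i. t $ i \<noteq> 0} = k" for k t
    using that
  proof (induction k arbitrary: t rule: less_induct)
    case (less k t)
    show ?case
    proof (cases "\<exists>m. t $ m = 1")
      case True
      then obtain m where "t $ m = 1" by blast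
      then have "t = axis m 1"
        using Omega_eq_axis less.prems(1) by blast
      then show ?thesis
        using psi Omega_component_le_one[OF less.prems(1)] by (simp add: Psi_def)
    next
      case False
      then have lt1: "\<And>m. t $ m < 1"
        using Omega_component_le_one[OF less.prems(1)] less_le by blast
      have "\<exists>i. i \<noteq> j \<and> t $ i \<noteq> 0"
      proof (rule ccontr)
        assume "\<nexists>i. i \<noteq> j \<and> t $ i \<noteq> 0"
        then have "(\<Sum>i\<in>UNIV - {j}. t $ i) = 0"
          by (intro sum.neutral) auto
        with less.prems(1) lt1[of j] sum.remove[of UNIV j "\<lambda>i. t $ i"] show False
          by (simp add: Omega_def)
      qed
      then obtain i where "i \<noteq> j" and ti: "t $ i \<noteq> 0"
        by blast
      define t' where "t' = face_projection i t"
      have t': "t' \<in> Omega"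
        unfolding t'_def using face_projection_in_Omega less.prems(1) lt1 by blast
      have support: "{l. t' $ l \<noteq> 0} = {l. t $ l \<noteq> 0} - {i}"
        using lt1[of i] by (auto simp: t'_def face_projection_def)
      have "card {l. t' $ l \<noteq> 0} < k"
        unfolding support less.prems(2)[symmetric] using ti by (intro card_Diff1_less) auto
      then have "t' $ j \<le> \<psi> t'"
        using less.IH t' by blast
      then have "t $ j \<le> (1 - t $ i) * \<psi> t'"
        using \<open>i \<noteq> j\<close> lt1[of i]
        by (simp add: t'_def face_projection_def divide_le_eq mult.commute)
      also have "\<dots> \<le> \<psi> t"
        unfolding t'_def using less.prems(1) lt1
        by (intro Psi_face_projection_le psi) (simp add: Omega_o_def)
      finally show ?thesis .
    qed
  qed
  with t show ?thesis by blast
qed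

lemma Psi_pos:
  assumes "\<psi> \<in> Psi" and "t \<in> Omega"
  shows "0 < \<psi> t"
proof -
  have "\<not> (\<forall>j. t $ j \<le> 0)"
    using assms(2) sum_nonpos[of UNIV "\<lambda>j. t $ j"] by (auto simp: Omega_def)
  then obtain j where "0 < t $ j"
    by (auto simp: not_le)
  then show ?thesis
    using Psi_ge_component[OF assms] by (meson less_le_trans)
qed

lemma ratio_attains_max_on_Omega:
  fixes \<psi> :: "real ^ 'n::finite \<Rightarrow> real"
  assumes "continuous_on Omega \<psi>" and "\<forall>t\<in>Omega. 0 < \<psi> t"
  shows "\<exists>t0\<in>Omega. \<forall>t\<in>Omega.
           (\<Sum>i\<in>UNIV. t $ i * c i) / \<psi> t \<le> (\<Sum>i\<in>UNIV. t0 $ i * c i) / \<psi> t0"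
proof -
  have "continuous_on Omega (\<lambda>t. (\<Sum>i\<in>UNIV. t $ i * c i) / \<psi> t)"
    by (intro continuous_intros assms(1)) (use assms(2) in force)
  moreover have "(Omega :: (real ^ 'n) set) \<noteq> {}"
    using axis_in_Omega by blast
  ultimately show ?thesis
    using continuous_attains_sup[OF compact_Omega] by blast
qed

lemma psi_norm_eq_scaled:
  fixes x :: "'a::real_normed_vector ^ 'n::finite"
  assumes "t \<in> Omega" and "0 \<le> r" and "\<And>i. norm (x $ i) = r * t $ i"
  shows "psi_norm \<psi> x = r * \<psi> t"
proof -
  have norm_sum: "(\<Sum>i\<in>UNIV. norm (x $ i)) = r"
    using assms by (simp add: Omega_def flip: sum_distrib_left)
  show ?thesis
  proof (cases "r = 0")
    case True
    then have "x = 0"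
      using assms(3) by (simp add: vec_eq_iff)
    with True show ?thesis
      by (simp add: psi_norm_def)
  next
    case False
    then have "x \<noteq> 0"
      using norm_sum by auto
    moreover have "(\<chi> i. norm (x $ i) / r) = t"
      using False by (simp add: assms(3) vec_eq_iff)
    ultimately show ?thesis
      by (simp add: psi_norm_def norm_sum)
  qed
qed

lemma abs_sum_le_psi_norm:
  fixes f :: "('a::real_normed_vector \<Rightarrow> real) ^ 'n::finite"
  assumes bl: "\<forall>i. bounded_linear (f $ i)" and pos: "\<forall>t\<in>Omega. 0 < \<psi> t"
    and le_M: "\<forall>t\<in>Omega. (\<Sum>i\<in>UNIV. t $ i * onorm (f $ i)) / \<psi> t \<le> M"
  shows "\<bar>\<Sum>i\<in>UNIV. (f $ i) (x $ i)\<bar> \<le> M * psi_norm \<psi> x"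
proof (cases "x = 0")
  case True
  then show ?thesis
    using bl by (simp add: psi_norm_def linear_simps(3))
next
  case False
  define s where "s = (\<Sum>i\<in>UNIV. norm (x $ i))"
  define t where "t = (\<chi> i. norm (x $ i) / s)"
  obtain k where "x $ k \<noteq> 0"
    using False by (auto simp: vec_eq_iff)
  then have "0 < norm (x $ k)"
    by simp
  also have "norm (x $ k) \<le> s"
    unfolding s_def by (rule member_le_sum) auto
  finally have "0 < s" .
  then have t: "t \<in> Omega"
    by (auto simp: Omega_def t_def s_def simp flip: sum_divide_distrib)
  have "\<bar>(f $ i) (x $ i)\<bar> \<le> onorm (f $ i) * norm (x $ i)" for i
    using onorm bl by (metis real_norm_def)
  then have "\<bar>\<Sum>i\<in>UNIV. (f $ i) (x $ i)\<bar> \<le> (\<Sum>i\<in>UNIV. onorm (f $ i) * norm (x $ i))"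
    by (intro order_trans[OF sum_abs] sum_mono)
  also have "\<dots> = s * (\<Sum>i\<in>UNIV. t $ i * onorm (f $ i))"
    using \<open>0 < s\<close> by (simp add: t_def sum_distrib_left mult.commute)
  also have "\<dots> = s * \<psi> t * ((\<Sum>i\<in>UNIV. t $ i * onorm (f $ i)) / \<psi> t)"
    using pos t by force
  also have "\<dots> \<le> s * \<psi> t * M"
    using \<open>0 < s\<close> pos t le_M by (intro mult_left_mono) auto
  also have "s * \<psi> t = psi_norm \<psi> x"
    using \<open>0 < s\<close> t by (intro psi_norm_eq_scaled[symmetric]) (auto simp: t_def)
  finally show ?thesis
    by (simp add: mult.commute)
qed

lemma exists_unit_vector_onorm_less:
  fixes f :: "'a::real_normed_vector \<Rightarrow> real"
  assumes bl: "bounded_linear f" and "0 < e" and "(u :: 'a) \<noteq> 0"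
  shows "\<exists>y. norm y = 1 \<and> onorm f - e < f y"
proof (rule ccontr)
  assume "\<not> ?thesis"
  then have unit: "f y \<le> onorm f - e" if "norm y = 1" for y
    using that by (meson not_less)
  have bound: "norm (f x) \<le> (onorm f - e) * norm x" for x
  proof (cases "x = 0")
    case True
    then show ?thesis
      using bl by (simp add: linear_simps(3))
  next
    case False
    define y where "y = x /\<^sub>R norm x"
    have "norm y = 1" "norm (- y) = 1"
      using False by (auto simp: y_def)
    then have "\<bar>f y\<bar> \<le> onorm f - e"
      using unit[of y] unit[of "- y"] bl by (simp add: linear_simps)
    moreover have "f x = norm x * f y"
      using False bl by (simp add: y_def linear_simps)
    ultimately show ?thesis
      by (simp add: abs_mult mult.commute mult_left_mono)
  qed
  have "0 \<le> (onorm f - e) * norm u"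
    using bound[of u] norm_ge_zero order_trans by blast
  then have "0 \<le> onorm f - e"
    using \<open>u \<noteq> 0\<close> by (simp add: zero_le_mult_iff)
  then have "onorm f \<le> onorm f - e"
    using bound by (rule onorm_bound)
  with \<open>0 < e\<close> show False
    by simp
qed

lemma exists_psi_norm_le_one_functional_ge:
  fixes f :: "('a::real_normed_vector \<Rightarrow> real) ^ 'n::finite"
  assumes bl: "\<forall>i. bounded_linear (f $ i)" and t: "t \<in> Omega" and pos: "0 < \<psi> t"
    and "0 < e"
  shows "\<exists>x. psi_norm \<psi> x \<le> 1 \<and>
           (\<Sum>i\<in>UNIV. t $ i * onorm (f $ i)) / \<psi> t - e \<le> \<bar>\<Sum>i\<in>UNIV. (f $ i) (x $ i)\<bar>"
proof (cases "\<exists>u::'a. u \<noteq> 0")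
  case False
  then have "onorm (f $ i) = 0" for i
    using bl onorm_eq_0 by (metis linear_simps(3))
  with \<open>0 < e\<close> show ?thesis
    by (intro exI[of _ 0]) (simp add: psi_norm_def)
next
  case True
  then obtain u :: 'a where "u \<noteq> 0"
    by blast
  have "\<exists>y. norm y = 1 \<and> onorm (f $ i) - e * \<psi> t < (f $ i) y" for i
    using \<open>0 < e\<close> pos
    by (intro exists_unit_vector_onorm_less[OF _ _ \<open>u \<noteq> 0\<close>]) (simp_all add: bl)
  then obtain y where y: "\<And>i. norm (y i) = 1" "\<And>i. onorm (f $ i) - e * \<psi> t < (f $ i) (y i)"
    by metis
  define x where "x = (\<chi> i. (t $ i / \<psi> t) *\<^sub>R y i)"
  have t_nonneg: "\<And>i. 0 \<le> t $ i" and t_sum: "(\<Sum>i\<in>UNIV. t $ i) = 1"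
    using t by (auto simp: Omega_def)
  have "psi_norm \<psi> x = (1 / \<psi> t) * \<psi> t"
    using t pos by (intro psi_norm_eq_scaled) (simp_all add: x_def y(1) t_nonneg)
  then have "psi_norm \<psi> x = 1"
    using pos by simp
  have "(\<Sum>i\<in>UNIV. t $ i * onorm (f $ i)) / \<psi> t - e =
      (\<Sum>i\<in>UNIV. t $ i / \<psi> t * (onorm (f $ i) - e * \<psi> t))"
    using pos by (simp add: algebra_simps sum_subtractf sum_divide_distrib t_sum
        flip: sum_distrib_left)
  also have "\<dots> \<le> (\<Sum>i\<in>UNIV. t $ i / \<psi> t * (f $ i) (y i))"
    using y(2) t_nonneg pos by (intro sum_mono mult_left_mono) (auto intro: less_imp_le)
  also have "\<dots> = (\<Sum>i\<in>UNIV. (f $ i) (x $ i))"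
    using bl by (simp add: x_def linear_simps)
  finally show ?thesis
    using \<open>psi_norm \<psi> x = 1\<close> by (intro exI[of _ x]) auto
qed

lemma cSup_eq_approx:
  fixes S :: "real set"
  assumes upper: "\<And>z. z \<in> S \<Longrightarrow> z \<le> M"
    and approx: "\<And>e. 0 < e \<Longrightarrow> \<exists>z\<in>S. M - e \<le> z"
  shows "Sup S = M"
proof (rule cSup_eq_non_empty)
  show "S \<noteq> {}"
    using approx[of 1] by auto
next
  fix y
  assume y: "\<And>z. z \<in> S \<Longrightarrow> z \<le> y"
  show "M \<le> y"
  proof (rule field_le_epsilon)
    fix e :: real
    assume "0 < e"
    then obtain z where "z \<in> S" and "M - e \<le> z"
      using approx by blast
    with y[of z] show "M \<le> y + e"
      by simp
  qed
qed (rule upper)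

lemma dual_psi_norm_eq_max_ratio:
  fixes f :: "('a::real_normed_vector \<Rightarrow> real) ^ 'n::finite"
  assumes bl: "\<forall>i. bounded_linear (f $ i)" and pos: "\<forall>t\<in>Omega. 0 < \<psi> t" and t0: "t0 \<in> Omega"
    and max: "\<forall>t\<in>Omega.
      (\<Sum>i\<in>UNIV. t $ i * onorm (f $ i)) / \<psi> t \<le> (\<Sum>i\<in>UNIV. t0 $ i * onorm (f $ i)) / \<psi> t0"
  shows "dual_psi_norm \<psi> f = (\<Sum>i\<in>UNIV. t0 $ i * onorm (f $ i)) / \<psi> t0"
    (is "_ = ?M")
  unfolding dual_psi_norm_def
proof (rule cSup_eq_approx)
  fix z
  assume "z \<in> {\<bar>\<Sum>i\<in>UNIV. (f $ i) (x $ i)\<bar> |x. psi_norm \<psi> x \<le> 1}"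
  then obtain x where z: "z = \<bar>\<Sum>i\<in>UNIV. (f $ i) (x $ i)\<bar>" and "psi_norm \<psi> x \<le> 1"
    by blast
  have "0 \<le> ?M"
    using t0 pos bl
    by (intro divide_nonneg_pos sum_nonneg mult_nonneg_nonneg onorm_pos_le) (auto simp: Omega_def)
  have "z \<le> ?M * psi_norm \<psi> x"
    unfolding z using bl pos max by (rule abs_sum_le_psi_norm)
  also have "\<dots> \<le> ?M"
    using \<open>psi_norm \<psi> x \<le> 1\<close> \<open>0 \<le> ?M\<close> by (rule mult_left_le)
  finally show "z \<le> ?M" .
next
  fix e :: real
  assume "0 < e"
  then show "\<exists>z\<in>{\<bar>\<Sum>i\<in>UNIV. (f $ i) (x $ i)\<bar> |x. psi_norm \<psi> x \<le> 1}. ?M - e \<le> z"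
    using exists_psi_norm_le_one_functional_ge[OF bl t0] pos t0 by blast
qed

theorem theorem3p1:
  fixes \<psi> :: "(real ^ 'n::finite) \<Rightarrow> real"
    and f :: "(('a::real_normed_vector) \<Rightarrow> real) ^ 'n"
  assumes "CARD('n) \<ge> 2"
    and "\<psi> \<in> Psi"
    and "\<forall>i. bounded_linear (f $ i)"
  shows "\<exists>t0\<in>Omega.
           dual_psi_norm \<psi> f = (\<Sum>i\<in>UNIV. t0 $ i * onorm (f $ i)) / \<psi> t0
         \<and> (\<forall>t\<in>Omega. (\<Sum>i\<in>UNIV. t $ i * onorm (f $ i)) / \<psi> t
                        \<le> (\<Sum>i\<in>UNIV. t0 $ i * onorm (f $ i)) / \<psi> t0)"
proof -
  have pos: "\<forall>t\<in>Omega. 0 < \<psi> t"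
    using Psi_pos assms(2) by blast
  have "continuous_on Omega \<psi>"
    using assms(2) by (simp add: Psi_def)
  then obtain t0 where t0: "t0 \<in> Omega" and max: "\<forall>t\<in>Omega.
      (\<Sum>i\<in>UNIV. t $ i * onorm (f $ i)) / \<psi> t \<le> (\<Sum>i\<in>UNIV. t0 $ i * onorm (f $ i)) / \<psi> t0"
    using ratio_attains_max_on_Omega[OF _ pos, where c = "\<lambda>i. onorm (f $ i)"] by blast
  with dual_psi_norm_eq_max_ratio[OF assms(3) pos t0 max] show ?thesis
    by blast
qed

end
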